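(* The problem of classifying pairs of square matrices up to simultaneous similarity contains neither (i) the problem of classifying $m\times n\times 2$ spatial matrices up to equivalence, nor (ii) for any $p\in\{0,1,2,3\}$, the problem of classifying tensors of type $(p,3-p)$.
   Context: Matrices are over a field $k$. The pair problem: pairs $(M,N)$ of $n\times n$ matrices ($n$ arbitrary) up to simultaneous similarity $(M,N)\mapsto(S^{-1}MS,S^{-1}NS)$. An $m\times n\times q$ spatial matrix is a family $[a_{ijk}]$ of elements of $k$; two are equivalent if $a'_{i'j'k'}=\sum_{i,j,k}a_{ijk}r_{ii'}s_{jj'}t_{kk'}$ for nonsingular $R=[r_{ii'}]$, $S=[s_{jj'}]$, $T=[t_{kk'}]$; for $q=2$ this is the problem of classifying pairs $(A_1,A_2)$ of $m\times n$ matrices up to $(A_1,A_2)\mapsto(PA_1Q,PA_2Q)$ ($P,Q$ nonsingular) and $(A_1,A_2)\mapsto(A_1t_{11}+A_2t_{21},A_1t_{12}+A_2t_{22})$ ($[t_{ij}]$ nonsingular). Tensors of type $(p,3-p)$: families $[a_{i_1i_2i_3}]_{i_1,i_2,i_3=1}^m$ up to $b_{j_1j_2j_3}=\sum a_{i_1i_2i_3}c_{i_1j_1}\cdots c_{i_pj_p}d_{i_{p+1}j_{p+1}}\cdots d_{i_3j_3}$, $C=[c_{ij}]$ nonsingular, $[d_{ij}]=(C^T)^{-1}$. A matrix problem $\mathcal A$ is given by a set $\mathcal A_1$ of $a$-tuples of matrices and admissible transformations ("$A$ reduces to $A'$"). $\mathcal B$ contains $\mathcal A$ if there is a $b$-tuple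 $\mathcal T(x_1,\dots,x_a)$ of matrices whose entries are noncommutative polynomials in $x_1,\dots,x_a$ (substitution $x_i\mapsto A_i$ blockwise, scalars $c$ becoming $cI$) such that (i) $\mathcal T(A)\in\mathcal B_1$ for $A\in\mathcal A_1$, and (ii) for all $A,A'\in\mathcal A_1$, $A$ reduces to $A'$ iff $\mathcal T(A)$ reduces to $\mathcal T(A')$. *)

theory Defs
  imports "Jordan_Normal_Form.Matrix"
begin

datatype 'a ncpoly = Var nat | Const 'a | Add "'a ncpoly" "'a ncpoly" | Mul "'a ncpoly" "'a ncpoly"

text \<open>Value of a polynomial at a tuple of matrices: x_i becomes A_i, a scalar c becomes cI
  (the zero scalar is a zero block of any size).\<close>
inductive ev :: "'a::field mat list \<Rightarrow> 'a ncpoly \<Rightarrow> 'a mat \<Rightarrow> bool" for A where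
  ev_var: "i < length A \<Longrightarrow> ev A (Var i) (A ! i)"
| ev_const: "ev A (Const c) (c \<cdot>\<^sub>m 1\<^sub>m n)"
| ev_zero: "ev A (Const 0) (0\<^sub>m r s)"
| ev_add: "ev A p M \<Longrightarrow> ev A q N \<Longrightarrow> dim_row M = dim_row N \<Longrightarrow> dim_col M = dim_col N
           \<Longrightarrow> ev A (Add p q) (M + N)"
| ev_mul: "ev A p M \<Longrightarrow> ev A q N \<Longrightarrow> dim_col M = dim_row N \<Longrightarrow> ev A (Mul p q) (M * N)"

text \<open>Sizes of blocks: each block row / column has the size of a row or column dimension
  of one of the substituted matrices.\<close>
datatype dimsym = RowOf nat | ColOf nat

fun dimval :: "'a mat list \<Rightarrow> dimsym \<Rightarrow> nat" where
  "dimval A (RowOf i) = dim_row (A ! i)"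
| "dimval A (ColOf i) = dim_col (A ! i)"

record 'a pmat =
  prows :: "dimsym list"
  pcols :: "dimsym list"
  pent :: "nat \<Rightarrow> nat \<Rightarrow> 'a ncpoly"

definition subst_pmat :: "'a::field pmat \<Rightarrow> 'a mat list \<Rightarrow> 'a mat \<Rightarrow> bool" where
  "subst_pmat T A M \<longleftrightarrow>
     (let R = map (dimval A) (prows T); C = map (dimval A) (pcols T) in
      (\<forall>d\<in>set (prows T) \<union> set (pcols T). case d of RowOf i \<Rightarrow> i < length A | ColOf i \<Rightarrow> i < length A) \<and>
      dim_row M = sum_list R \<and> dim_col M = sum_list C \<and>
      (\<exists>E. \<forall>r < length R. \<forall>s < length C.
          E r s \<in> carrier_mat (R ! r) (C ! s) \<and> ev A (pent T r s) (E r s) \<and>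
          (\<forall>i < R ! r. \<forall>j < C ! s.
             M $$ (sum_list (take r R) + i, sum_list (take s C) + j) = E r s $$ (i, j))))"

definition subst_tuple :: "'a::field pmat list \<Rightarrow> 'a mat list \<Rightarrow> 'a mat list \<Rightarrow> bool" where
  "subst_tuple T A Ms \<longleftrightarrow> length Ms = length T \<and> (\<forall>l < length T. subst_pmat (T ! l) A (Ms ! l))"

text \<open>A matrix problem: a set of tuples of matrices together with the relation "reduces to".\<close>
type_synonym 'a matrix_problem = "'a mat list set \<times> ('a mat list \<Rightarrow> 'a mat list \<Rightarrow> bool)"

definition contains :: "'a::field matrix_problem \<Rightarrow> 'a matrix_problem \<Rightarrow> bool" where
  "contains \<B> \<A> \<longleftrightarrow> (\<exists>T.
     (\<forall>A\<in>fst \<A>. \<exists>Ms. subst_tuple T A Ms) \<and>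
     (\<forall>A\<in>fst \<A>. \<forall>Ms. subst_tuple T A Ms \<longrightarrow> Ms \<in> fst \<B>) \<and>
     (\<forall>A\<in>fst \<A>. \<forall>A'\<in>fst \<A>. \<forall>Ms Ms'. subst_tuple T A Ms \<longrightarrow> subst_tuple T A' Ms' \<longrightarrow>
        (snd \<A> A A' \<longleftrightarrow> snd \<B> Ms Ms')))"

definition pair_problem :: "'a::field matrix_problem" where
  "pair_problem =
    ({[M, N] | M N n. n \<ge> 1 \<and> M \<in> carrier_mat n n \<and> N \<in> carrier_mat n n},
     \<lambda>X Y. \<exists>n S Sinv. S \<in> carrier_mat n n \<and> Sinv \<in> carrier_mat n n \<and>
       S * Sinv = 1\<^sub>m n \<and> Sinv * S = 1\<^sub>m n \<and>
       (\<exists>M N. X = [M, N] \<and> M \<in> carrier_mat n n \<and> N \<in> carrier_mat n n \<and>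
         Y = [Sinv * M * S, Sinv * N * S]))"

text \<open>m x n x 2 spatial matrices [a_ijk], given by the pair (A_1, A_2), A_k = [a_ijk]_ij.
  [a'_i'j'k'] = sum a_ijk r_ii' s_jj' t_kk' means A'_k' = R^T (sum_k t_kk' A_k) S.\<close>
definition spatial2_problem :: "'a::field matrix_problem" where
  "spatial2_problem =
    ({[A1, A2] | A1 A2 m n. m \<ge> 1 \<and> n \<ge> 1 \<and> A1 \<in> carrier_mat m n \<and> A2 \<in> carrier_mat m n},
     \<lambda>X Y. \<exists>m n R S T A1 A2. X = [A1, A2] \<and> A1 \<in> carrier_mat m n \<and> A2 \<in> carrier_mat m n \<and>
       R \<in> carrier_mat m m \<and> invertible_mat R \<and> S \<in> carrier_mat n n \<and> invertible_mat S \<and>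
       T \<in> carrier_mat 2 2 \<and> invertible_mat T \<and>
       Y = [transpose_mat R * (T $$ (0,0) \<cdot>\<^sub>m A1 + T $$ (1,0) \<cdot>\<^sub>m A2) * S,
            transpose_mat R * (T $$ (0,1) \<cdot>\<^sub>m A1 + T $$ (1,1) \<cdot>\<^sub>m A2) * S])"

text \<open>An m x m x m array [a_ijk] is given by the m x m^2 matrix [A_1 | ... | A_m]
  of its slices A_k = [a_ijk]_ij (0-based: entry (i, k*m + j) is a_ijk).\<close>
definition tent :: "nat \<Rightarrow> 'a mat \<Rightarrow> nat \<Rightarrow> nat \<Rightarrow> nat \<Rightarrow> 'a" where
  "tent m M i j k = M $$ (i, k * m + j)"

text \<open>Tensors of type (p, 3-p): the first p indices transform by C, the others by
  D = (C^T)^(-1).\<close>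
definition tensor_problem :: "nat \<Rightarrow> 'a::field matrix_problem" where
  "tensor_problem p =
    ({[M] | M m. m \<ge> 1 \<and> M \<in> carrier_mat m (m * m)},
     \<lambda>X Y. \<exists>m M N C D. X = [M] \<and> Y = [N] \<and> m \<ge> 1 \<and>
       M \<in> carrier_mat m (m * m) \<and> N \<in> carrier_mat m (m * m) \<and>
       C \<in> carrier_mat m m \<and> D \<in> carrier_mat m m \<and>
       transpose_mat C * D = 1\<^sub>m m \<and> D * transpose_mat C = 1\<^sub>m m \<and>
       (let F = (\<lambda>l. if l < p then C else D) in
        \<forall>j1<m. \<forall>j2<m. \<forall>j3<m.
          tent m N j1 j2 j3 =
            (\<Sum>i1<m. \<Sum>i2<m. \<Sum>i3<m. tent m M i1 i2 i3 *
               F 0 $$ (i1, j1) * F 1 $$ (i2, j2) * F 2 $$ (i3, j3))))"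

end

theory Submission
  imports Defs
begin

text \<open>A containing substitution T maps related inputs to similar pairs and, being faithful,
  must reflect similarity back. So it suffices to exhibit two unrelated inputs whose images
  are forced to be similar.

  Spatial matrices: on simultaneously diagonal inputs every block of T is diagonal, with the
  commutative values of the polynomial entries on its diagonal. The equivalent 1 x 1 pairs
  (1, 0) and (1, 1) thus give similar pairs (G0, G1) and (H0, H1), and interleaving these
  shows that the images of (I, 0) and (I, diag(0, 1)) are similar too; but these two are not
  equivalent, since every pencil of (I, 0) consists of multiples of a single matrix.

  Tensors: a 2 x 2 x 2 array is a 2 x 4 matrix M, and a noncommutative polynomial in one
  non-square matrix is a multiple of M, a scalar matrix or zero. Swapping the two indices
  in each coordinate pair of rows and of columns therefore conjugates T(M) by an involutive
  permutation. It turns e0 \<otimes> e0 \<otimes> e0 into e1 \<otimes> e1 \<otimes> e0, and these two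
  tensors are not equivalent for any type (p, 3 - p).\<close>

section \<open>Polynomials at simultaneously diagonal matrices\<close>

fun scalar_eval :: "(nat \<Rightarrow> 'a::field) \<Rightarrow> 'a ncpoly \<Rightarrow> 'a" where
  "scalar_eval w (Var i) = w i"
| "scalar_eval w (Const c) = c"
| "scalar_eval w (Add p q) = scalar_eval w p + scalar_eval w q"
| "scalar_eval w (Mul p q) = scalar_eval w p * scalar_eval w q"

text \<open>Square blocks of a size other than k contain no variable, so their value does not depend
  on the weights w.\<close>

definition diag_value_shape :: "nat \<Rightarrow> (nat \<Rightarrow> nat \<Rightarrow> 'a::field) \<Rightarrow> 'a ncpoly \<Rightarrow> 'a mat \<Rightarrow> bool" where
  "diag_value_shape k W p E \<longleftrightarrow>
     (if dim_row E = dim_col E then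
        (if dim_row E = k then E = mat_diag k (\<lambda>i. scalar_eval (W i) p)
         else \<forall>w. E = scalar_eval w p \<cdot>\<^sub>m 1\<^sub>m (dim_row E))
      else E = 0\<^sub>m (dim_row E) (dim_col E) \<and> (\<forall>w. scalar_eval w p = 0))"

lemma diag_value_shape_add:
  assumes p: "diag_value_shape k W p E" and q: "diag_value_shape k W q F"
    and EF: "dim_row E = dim_row F" "dim_col E = dim_col F"
  shows "diag_value_shape k W (Add p q) (E + F)"
proof -
  define r c where "r = dim_row E" and "c = dim_col E"
  then have E: "E \<in> carrier_mat r c" and F: "F \<in> carrier_mat r c"
    using EF by auto
  note p' = p[unfolded diag_value_shape_def carrier_matD[OF E]]
  note q' = q[unfolded diag_value_shape_def carrier_matD[OF F]]
  have EFdim: "dim_row (E + F) = r" "dim_col (E + F) = c" using E F by auto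
  consider (diag) "r = c" "r = k" | (scalar) "r = c" "r \<noteq> k" | (zero) "r \<noteq> c"
    by argo
  then show ?thesis
  proof cases
    case diag
    then show ?thesis using p' q' EFdim
      by (auto simp: diag_value_shape_def mat_diag_def intro!: eq_matI)
  next
    case scalar
    have "E + F = scalar_eval w (Add p q) \<cdot>\<^sub>m 1\<^sub>m r" for w
    proof -
      have "E = scalar_eval w p \<cdot>\<^sub>m 1\<^sub>m r" "F = scalar_eval w q \<cdot>\<^sub>m 1\<^sub>m r"
        using p' q' scalar by auto
      then show ?thesis by (auto intro!: eq_matI simp: algebra_simps)
    qed
    then show ?thesis using scalar EFdim by (simp add: diag_value_shape_def)
  next
    case zero
    then show ?thesis using p' q' EFdim by (simp add: diag_value_shape_def)
  qed
qed

lemma diag_value_shape_mult: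
  assumes p: "diag_value_shape k W p E" and q: "diag_value_shape k W q F"
    and EF: "dim_col E = dim_row F"
  shows "diag_value_shape k W (Mul p q) (E * F)"
proof -
  define r l s where "r = dim_row E" and "l = dim_col E" and "s = dim_col F"
  then have E: "E \<in> carrier_mat r l" and F: "F \<in> carrier_mat l s"
    using EF by auto
  note p' = p[unfolded diag_value_shape_def carrier_matD[OF E]]
  note q' = q[unfolded diag_value_shape_def carrier_matD[OF F]]
  have EFdim: "dim_row (E * F) = r" "dim_col (E * F) = s" using E F by auto
  consider (diag) "r = l" "l = s" "r = k" | (scalar) "r = l" "l = s" "r \<noteq> k"
    | (zero_left) "r \<noteq> l" | (zero_right) "l \<noteq> s"
    by argo
  then show ?thesis
  proof cases
    case diag
    then show ?thesis using p' q' EFdim by (simp add: diag_value_shape_def)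
  next
    case scalar
    have "E * F = scalar_eval w (Mul p q) \<cdot>\<^sub>m 1\<^sub>m r" for w
    proof -
      have "E = scalar_eval w p \<cdot>\<^sub>m 1\<^sub>m r" "F = scalar_eval w q \<cdot>\<^sub>m 1\<^sub>m r"
        using p' q' scalar by auto
      then show ?thesis
        by (simp add: mult_smult_distrib[of _ r r _ r] mult_smult_assoc_mat[of _ r r _ r])
          (auto intro!: eq_matI)
    qed
    then show ?thesis using scalar EFdim by (simp add: diag_value_shape_def)
  next
    case zero_left
    then have "E = 0\<^sub>m r l" "\<forall>w. scalar_eval w p = 0" using p' by auto
    then show ?thesis using zero_left F EFdim
      by (auto simp: diag_value_shape_def mat_diag_def intro!: eq_matI)
  next
    case zero_right
    then have "F = 0\<^sub>m l s" "\<forall>w. scalar_eval w q = 0" using q' by auto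
    then show ?thesis using zero_right E EFdim
      by (auto simp: diag_value_shape_def mat_diag_def intro!: eq_matI)
  qed
qed

lemma ev_diagonal_shape:
  assumes "ev A p E" and A: "\<And>v. v < length A \<Longrightarrow> A ! v = mat_diag k (\<lambda>i. W i v)"
  shows "diag_value_shape k W p E"
  using assms(1)
proof induction
  case (ev_var i)
  then show ?case using A by (simp add: diag_value_shape_def mat_diag_def)
next
  case (ev_const c n)
  then show ?case by (auto simp: diag_value_shape_def mat_diag_def intro!: eq_matI)
next
  case (ev_zero r s)
  then show ?case by (auto simp: diag_value_shape_def mat_diag_def intro!: eq_matI)
next
  case (ev_add p E q F)
  then show ?case by (intro diag_value_shape_add)
next
  case (ev_mul p E q F)
  then show ?case by (intro diag_value_shape_mult)
qed

lemma subst_pmat_diagonal: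
  assumes sub: "subst_pmat t A Ms"
    and A: "\<forall>v < length A. A ! v = mat_diag k (\<lambda>i. W i v)"
  shows "Ms \<in> carrier_mat (k * length (prows t)) (k * length (pcols t))"
    and "\<And>r s i j. r < length (prows t) \<Longrightarrow> s < length (pcols t) \<Longrightarrow> i < k \<Longrightarrow> j < k \<Longrightarrow>
           Ms $$ (k * r + i, k * s + j) = (if i = j then scalar_eval (W i) (pent t r s) else 0)"
proof -
  have labels: "\<forall>d\<in>set (prows t) \<union> set (pcols t).
      case d of RowOf i \<Rightarrow> i < length A | ColOf i \<Rightarrow> i < length A"
    using sub unfolding subst_pmat_def Let_def by blast
  have "A ! v \<in> carrier_mat k k" if "v < length A" for v
    using A that by simp
  then have dims_A: "dim_row (A ! v) = k" "dim_col (A ! v) = k" if "v < length A" for v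
    using that by auto
  have "dimval A d = k" if "d \<in> set (prows t) \<union> set (pcols t)" for d
  proof -
    have "case d of RowOf i \<Rightarrow> i < length A | ColOf i \<Rightarrow> i < length A"
      using labels that by blast
    then show ?thesis using dims_A by (cases d) auto
  qed
  then have R: "map (dimval A) (prows t) = replicate (length (prows t)) k"
    and C: "map (dimval A) (pcols t) = replicate (length (pcols t)) k"
    by (auto intro!: replicate_eqI)
  obtain E where dims: "dim_row Ms = length (prows t) * k" "dim_col Ms = length (pcols t) * k"
    and E: "\<forall>r < length (prows t). \<forall>s < length (pcols t).
          E r s \<in> carrier_mat k k \<and> ev A (pent t r s) (E r s) \<and>
          (\<forall>i < k. \<forall>j < k. Ms $$ (r * k + i, s * k + j) = E r s $$ (i, j))"
    using sub unfolding subst_pmat_def Let_def R C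
    by (auto simp: sum_list_replicate take_replicate min_def split: if_splits)
  show "Ms \<in> carrier_mat (k * length (prows t)) (k * length (pcols t))"
    using dims by (auto simp: mult.commute)
  fix r s i j assume rsij: "r < length (prows t)" "s < length (pcols t)" "i < k" "j < k"
  then have E_rs: "E r s \<in> carrier_mat k k" "ev A (pent t r s) (E r s)"
    and "Ms $$ (r * k + i, s * k + j) = E r s $$ (i, j)"
    using E by auto
  then have entry: "Ms $$ (k * r + i, k * s + j) = E r s $$ (i, j)"
    by (simp add: mult.commute)
  have "E r s = mat_diag k (\<lambda>i. scalar_eval (W i) (pent t r s))"
    using ev_diagonal_shape[OF E_rs(2) A[rule_format]] E_rs(1) unfolding diag_value_shape_def by auto
  then show "Ms $$ (k * r + i, k * s + j) = (if i = j then scalar_eval (W i) (pent t r s) else 0)"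
    using entry rsij by (simp add: mat_diag_def)
qed

definition scalar_value_mat :: "'a::field pmat \<Rightarrow> (nat \<Rightarrow> 'a) \<Rightarrow> 'a mat" where
  "scalar_value_mat t w =
     mat (length (prows t)) (length (pcols t)) (\<lambda>(r, s). scalar_eval w (pent t r s))"

lemma subst_pmat_scalars:
  assumes "subst_pmat t A Ms" and "\<forall>v < length A. A ! v = mat_diag 1 (\<lambda>_. w v)"
  shows "Ms = scalar_value_mat t w"
proof -
  have "Ms \<in> carrier_mat (1 * length (prows t)) (1 * length (pcols t))"
    and "\<And>r s. r < length (prows t) \<Longrightarrow> s < length (pcols t) \<Longrightarrow>
           Ms $$ (1 * r + 0, 1 * s + 0) = scalar_eval w (pent t r s)"
    using subst_pmat_diagonal[of t A Ms 1 "\<lambda>_. w"] assms by auto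
  then show ?thesis by (auto simp: scalar_value_mat_def intro!: eq_matI)
qed

definition interleave_mat :: "'a::zero mat \<Rightarrow> 'a mat \<Rightarrow> 'a mat" where
  "interleave_mat F0 F1 = mat (2 * dim_row F0) (2 * dim_col F0)
     (\<lambda>(a, b). if a mod 2 = b mod 2 then (if a mod 2 = 0 then F0 else F1) $$ (a div 2, b div 2)
               else 0)"

lemma interleave_mat_dims [simp]:
  "dim_row (interleave_mat F0 F1) = 2 * dim_row F0"
  "dim_col (interleave_mat F0 F1) = 2 * dim_col F0"
  by (auto simp: interleave_mat_def)

lemma subst_pmat_diagonal2:
  assumes sub: "subst_pmat t A Ms" and A: "\<forall>v < length A. A ! v = mat_diag 2 (\<lambda>i. W i v)"
  shows "Ms = interleave_mat (scalar_value_mat t (W 0)) (scalar_value_mat t (W 1))"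
proof (rule eq_matI)
  note Ms = subst_pmat_diagonal[OF sub A]
  show "dim_row Ms = dim_row (interleave_mat (scalar_value_mat t (W 0)) (scalar_value_mat t (W 1)))"
    "dim_col Ms = dim_col (interleave_mat (scalar_value_mat t (W 0)) (scalar_value_mat t (W 1)))"
    using Ms(1) by (auto simp: scalar_value_mat_def)
  fix a b
  assume "a < dim_row (interleave_mat (scalar_value_mat t (W 0)) (scalar_value_mat t (W 1)))"
    "b < dim_col (interleave_mat (scalar_value_mat t (W 0)) (scalar_value_mat t (W 1)))"
  then have ab: "a div 2 < length (prows t)" "b div 2 < length (pcols t)"
    by (auto simp: scalar_value_mat_def)
  have "W (a mod 2) = (if a mod 2 = 0 then W 0 else W 1)"
    by (metis mod2_eq_if)
  then show "Ms $$ (a, b) =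
      interleave_mat (scalar_value_mat t (W 0)) (scalar_value_mat t (W 1)) $$ (a, b)"
    using Ms(2)[OF ab, of "a mod 2" "b mod 2"] ab
    by (simp add: interleave_mat_def scalar_value_mat_def)
qed

lemma mat_diag_zero: "mat_diag n (\<lambda>_. 0) = (0\<^sub>m n n :: 'a::field mat)"
  by (auto simp: mat_diag_def intro!: eq_matI)

lemma subst_tuple_scalars:
  assumes "subst_tuple T A Ms" and "\<forall>v < length A. A ! v = mat_diag 1 (\<lambda>_. w v)"
  shows "Ms = map (\<lambda>t. scalar_value_mat t w) T"
  using assms by (auto simp: subst_tuple_def intro!: nth_equalityI subst_pmat_scalars)

lemma subst_tuple_diagonal2:
  assumes "subst_tuple T A Ms" and "\<forall>v < length A. A ! v = mat_diag 2 (\<lambda>i. W i v)"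
  shows "Ms = map (\<lambda>t. interleave_mat (scalar_value_mat t (W 0)) (scalar_value_mat t (W 1))) T"
proof (rule nth_equalityI)
  show "length Ms = length (map (\<lambda>t. interleave_mat (scalar_value_mat t (W 0))
      (scalar_value_mat t (W 1))) T)"
    using assms(1) by (simp add: subst_tuple_def)
  fix l assume "l < length Ms"
  then show "Ms ! l = map (\<lambda>t. interleave_mat (scalar_value_mat t (W 0))
      (scalar_value_mat t (W 1))) T ! l"
    using assms subst_pmat_diagonal2[of "T ! l" A "Ms ! l" W] by (simp add: subst_tuple_def)
qed

lemma pair_problem_relI:
  assumes "S \<in> carrier_mat n n" "Sinv \<in> carrier_mat n n" "S * Sinv = 1\<^sub>m n" "Sinv * S = 1\<^sub>m n"
    and "M \<in> carrier_mat n n" "N \<in> carrier_mat n n"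
  shows "snd (pair_problem :: 'a::field matrix_problem) [M, N] [Sinv * M * S, Sinv * N * S]"
  unfolding pair_problem_def snd_conv using assms by blast

lemma pair_problem_relE:
  assumes "snd (pair_problem :: 'a::field matrix_problem) [M, N] [M', N']"
  obtains n S Sinv where "S \<in> carrier_mat n n" "Sinv \<in> carrier_mat n n"
    "S * Sinv = 1\<^sub>m n" "Sinv * S = 1\<^sub>m n" "M \<in> carrier_mat n n" "N \<in> carrier_mat n n"
    "M' = Sinv * M * S" "N' = Sinv * N * S"
  using assms unfolding pair_problem_def by auto

lemma sum_lessThan_double: "(\<Sum>x < 2 * (b :: nat). f x) = (\<Sum>d < b. f (2 * d) + f (2 * d + 1))"
  by (induction b) (auto simp: sum.distrib ac_simps)

lemma interleave_mat_mult:
  assumes "F0 \<in> carrier_mat a b" "F1 \<in> carrier_mat a b" "G0 \<in> carrier_mat b c" "G1 \<in> carrier_mat b c"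
  shows "interleave_mat F0 F1 * interleave_mat G0 G1 = interleave_mat (F0 * G0) (F1 * G1)"
proof (rule eq_matI)
  fix i j
  assume "i < dim_row (interleave_mat (F0 * G0) (F1 * G1))"
    "j < dim_col (interleave_mat (F0 * G0) (F1 * G1))"
  then have i: "i < 2 * a" and j: "j < 2 * c" using assms by auto
  let ?F = "interleave_mat F0 F1" and ?G = "interleave_mat G0 G1"
  have "(?F * ?G) $$ (i, j) = (\<Sum>x < 2 * b. ?F $$ (i, x) * ?G $$ (x, j))"
    using i j assms by (auto simp: scalar_prod_def intro!: sum.cong)
  also have "\<dots> = (\<Sum>d < b. ?F $$ (i, 2 * d) * ?G $$ (2 * d, j)
                          + ?F $$ (i, 2 * d + 1) * ?G $$ (2 * d + 1, j))"
    by (rule sum_lessThan_double)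
  also have "\<dots> = interleave_mat (F0 * G0) (F1 * G1) $$ (i, j)"
    using i j assms by (auto simp: interleave_mat_def scalar_prod_def intro!: sum.cong)
  finally show "(?F * ?G) $$ (i, j) = interleave_mat (F0 * G0) (F1 * G1) $$ (i, j)" .
qed (use assms in auto)

lemma interleave_mat_one: "interleave_mat (1\<^sub>m n) (1\<^sub>m n) = (1\<^sub>m (2 * n) :: 'a::field mat)"
proof (rule eq_matI)
  fix i j assume "i < dim_row (1\<^sub>m (2 * n) :: 'a mat)" "j < dim_col (1\<^sub>m (2 * n) :: 'a mat)"
  then show "interleave_mat (1\<^sub>m n) (1\<^sub>m n) $$ (i, j) = (1\<^sub>m (2 * n) :: 'a mat) $$ (i, j)"
    by (auto simp: interleave_mat_def) (metis div_mult_mod_eq)+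
qed auto

lemma pair_problem_rel_interleave:
  assumes "snd (pair_problem :: 'a::field matrix_problem) [G0, G1] [H0, H1]"
  shows "snd (pair_problem :: 'a matrix_problem)
           [interleave_mat G0 G0, interleave_mat G1 G1] [interleave_mat G0 H0, interleave_mat G1 H1]"
proof -
  obtain n S Sinv where S: "S \<in> carrier_mat n n" "Sinv \<in> carrier_mat n n"
    "S * Sinv = 1\<^sub>m n" "Sinv * S = 1\<^sub>m n" and G: "G0 \<in> carrier_mat n n" "G1 \<in> carrier_mat n n"
    and H: "H0 = Sinv * G0 * S" "H1 = Sinv * G1 * S"
    using assms by (rule pair_problem_relE)
  have one: "1\<^sub>m n \<in> carrier_mat n n" by simp
  define T Tinv where "T = interleave_mat (1\<^sub>m n) S" and "Tinv = interleave_mat (1\<^sub>m n) Sinv"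
  have "T * Tinv = interleave_mat (1\<^sub>m n * 1\<^sub>m n) (S * Sinv)"
    "Tinv * T = interleave_mat (1\<^sub>m n * 1\<^sub>m n) (Sinv * S)"
    unfolding T_def Tinv_def using S by (simp_all only: interleave_mat_mult[OF one _ one])
  then have inverse: "T * Tinv = 1\<^sub>m (2 * n)" "Tinv * T = 1\<^sub>m (2 * n)"
    using S by (simp_all add: interleave_mat_one)
  have conj: "Tinv * interleave_mat K K * T = interleave_mat K (Sinv * K * S)"
    if K: "K \<in> carrier_mat n n" for K
  proof -
    have "Tinv * interleave_mat K K = interleave_mat K (Sinv * K)"
      unfolding Tinv_def using interleave_mat_mult[OF one S(2) K K] K by simp
    moreover have "interleave_mat K (Sinv * K) * T = interleave_mat K (Sinv * K * S)"
      unfolding T_def using interleave_mat_mult[OF K _ one S(1), of "Sinv * K"] K S(2) by simp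
    ultimately show ?thesis by simp
  qed
  have interleave_carrier: "interleave_mat K L \<in> carrier_mat (2 * n) (2 * n)"
    if "K \<in> carrier_mat n n" for K L :: "'a mat"
    using that by (intro carrier_matI) auto
  have "T \<in> carrier_mat (2 * n) (2 * n)" "Tinv \<in> carrier_mat (2 * n) (2 * n)"
    unfolding T_def Tinv_def using interleave_carrier[OF one] by blast+
  from pair_problem_relI[OF this inverse
      interleave_carrier[OF G(1), of G0] interleave_carrier[OF G(2), of G1]]
  show ?thesis
    unfolding conj[OF G(1)] conj[OF G(2)] H .
qed

section \<open>Spatial matrices\<close>

lemma invertible_upper_unitriangular_2:
  "invertible_mat (mat 2 2 (\<lambda>(i, j). if i = 1 \<and> j = 0 then 0 else 1) :: 'a::field mat)"
proof -
  let ?T = "mat 2 2 (\<lambda>(i, j). if i = 1 \<and> j = 0 then 0 else 1) :: 'a mat"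
  let ?Tinv = "mat 2 2 (\<lambda>(i, j). if i = 0 \<and> j = 1 then -1 else if i = 1 \<and> j = 0 then 0 else 1) :: 'a mat"
  have "?T * ?Tinv = 1\<^sub>m 2" "?Tinv * ?T = 1\<^sub>m 2"
    by (auto intro!: eq_matI simp: scalar_prod_def less_2_cases_iff atLeast0LessThan numeral_2_eq_2)
  then show ?thesis unfolding invertible_mat_def inverts_mat_def by auto
qed

lemma spatial2_rel_scalar_pairs:
  "snd (spatial2_problem :: 'a::field matrix_problem) [1\<^sub>m 1, 0\<^sub>m 1 1] [1\<^sub>m 1, 1\<^sub>m 1]"
proof -
  let ?T = "mat 2 2 (\<lambda>(i, j). if i = 1 \<and> j = 0 then 0 else 1) :: 'a mat"
  have "invertible_mat (1\<^sub>m 1 :: 'a mat)"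
    by (auto simp: invertible_mat_def inverts_mat_def intro!: exI[of _ "1\<^sub>m 1"])
  moreover have "transpose_mat (1\<^sub>m 1) * (?T $$ (0, l) \<cdot>\<^sub>m 1\<^sub>m 1 + ?T $$ (1, l) \<cdot>\<^sub>m 0\<^sub>m 1 1) * 1\<^sub>m 1
      = (1\<^sub>m 1 :: 'a mat)" if "l < 2" for l
    using that by (auto intro!: eq_matI)
  ultimately show ?thesis
    unfolding spatial2_problem_def snd_conv
    using invertible_upper_unitriangular_2
    by (intro exI[of _ 1] exI[of _ "1\<^sub>m 1"] exI[of _ ?T] exI[of _ "0\<^sub>m 1 1"]) auto
qed

lemma spatial2_not_rel_diag:
  "\<not> snd (spatial2_problem :: 'a::field matrix_problem)
       [1\<^sub>m 2, 0\<^sub>m 2 2] [1\<^sub>m 2, mat_diag 2 (\<lambda>i. if i = 0 then 0 else 1)]"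
proof
  let ?D = "mat_diag 2 (\<lambda>i. if i = 0 then 0 else 1) :: 'a mat"
  assume "snd (spatial2_problem :: 'a matrix_problem) [1\<^sub>m 2, 0\<^sub>m 2 2] [1\<^sub>m 2, ?D]"
  then obtain m n R S T A1 A2 where X: "[1\<^sub>m 2, 0\<^sub>m 2 2] = [A1, A2]" and A: "A1 \<in> carrier_mat m n"
    and R: "R \<in> carrier_mat m m" and S: "S \<in> carrier_mat n n"
    and Y: "[1\<^sub>m 2, ?D] = [transpose_mat R * (T $$ (0, 0) \<cdot>\<^sub>m A1 + T $$ (1, 0) \<cdot>\<^sub>m A2) * S,
                              transpose_mat R * (T $$ (0, 1) \<cdot>\<^sub>m A1 + T $$ (1, 1) \<cdot>\<^sub>m A2) * S]"
    unfolding spatial2_problem_def snd_conv by blast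
  have A12: "A1 = 1\<^sub>m 2" "A2 = 0\<^sub>m 2 2" using X by simp_all
  have images: "1\<^sub>m 2 = transpose_mat R * (T $$ (0, 0) \<cdot>\<^sub>m 1\<^sub>m 2 + T $$ (1, 0) \<cdot>\<^sub>m 0\<^sub>m 2 2) * S"
      "?D = transpose_mat R * (T $$ (0, 1) \<cdot>\<^sub>m 1\<^sub>m 2 + T $$ (1, 1) \<cdot>\<^sub>m 0\<^sub>m 2 2) * S"
    using Y unfolding A12 by simp_all
  have Rt: "transpose_mat R \<in> carrier_mat 2 2" and S: "S \<in> carrier_mat 2 2"
    using A R S unfolding A12 by auto
  \<comment> \<open>Since the second slice is zero, both image slices are multiples of the one matrix Z.\<close>
  define Z where "Z = transpose_mat R * S"
  have multiple: "transpose_mat R * (a \<cdot>\<^sub>m 1\<^sub>m 2 + b \<cdot>\<^sub>m 0\<^sub>m 2 2) * S = a \<cdot>\<^sub>m Z" for a b :: 'a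
  proof -
    have "a \<cdot>\<^sub>m 1\<^sub>m 2 + b \<cdot>\<^sub>m 0\<^sub>m 2 2 = (a \<cdot>\<^sub>m 1\<^sub>m 2 :: 'a mat)" by (rule eq_matI) auto
    moreover have "transpose_mat R * (a \<cdot>\<^sub>m 1\<^sub>m 2) = a \<cdot>\<^sub>m transpose_mat R"
      using mult_smult_distrib[OF Rt, of "1\<^sub>m 2" 2 a] Rt by simp
    ultimately show ?thesis
      unfolding Z_def by (simp add: mult_smult_assoc_mat[OF Rt S])
  qed
  have Z: "Z \<in> carrier_mat 2 2" unfolding Z_def using Rt S by simp
  have slice0: "1\<^sub>m 2 = T $$ (0, 0) \<cdot>\<^sub>m Z" and slice1: "?D = T $$ (0, 1) \<cdot>\<^sub>m Z"
    using images multiple by simp_all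
  have "T $$ (0, 0) * Z $$ (0, 0) = 1"
    using arg_cong[OF slice0, of "\<lambda>A. A $$ (0, 0)"] Z by simp
  moreover have "T $$ (0, 1) * Z $$ (0, 0) = 0"
    using arg_cong[OF slice1, of "\<lambda>A. A $$ (0, 0)"] Z by (simp add: mat_diag_def)
  moreover have "T $$ (0, 1) * Z $$ (1, 1) = 1"
    using arg_cong[OF slice1, of "\<lambda>A. A $$ (1, 1)"] Z by (simp add: mat_diag_def)
  ultimately show False by (metis mult_eq_0_iff mult_zero_left zero_neq_one)
qed

lemma subst_tuple_interleave_similar:
  assumes U: "subst_tuple T [1\<^sub>m 1, 0\<^sub>m 1 1] MsU" and V: "subst_tuple T [1\<^sub>m 1, 1\<^sub>m 1] MsV"
    and X: "subst_tuple T [1\<^sub>m 2, 0\<^sub>m 2 2] MsX"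
    and Y: "subst_tuple T [1\<^sub>m 2, mat_diag 2 (\<lambda>i. if i = 0 then 0 else 1)] MsY"
    and UV: "snd (pair_problem :: 'a::field matrix_problem) MsU MsV"
  shows "snd (pair_problem :: 'a matrix_problem) MsX MsY"
proof -
  define wU wV :: "nat \<Rightarrow> 'a" where "wU = (\<lambda>v. if v = 0 then 1 else 0)" and "wV = (\<lambda>v. 1)"
  have "length T = 2" using U UV by (auto simp: subst_tuple_def pair_problem_def)
  then obtain t0 t1 where T: "T = [t0, t1]"
    by (metis (no_types) length_0_conv length_Suc_conv numeral_2_eq_2)
  let ?G = "\<lambda>t. scalar_value_mat t wU" and ?H = "\<lambda>t. scalar_value_mat t wV"
  have "MsU = [?G t0, ?G t1]"
    using subst_tuple_scalars[OF U, of wU] T by (simp add: wU_def less_Suc_eq mat_diag_zero)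
  moreover have "MsV = [?H t0, ?H t1]"
    using subst_tuple_scalars[OF V, of wV] T by (simp add: wV_def less_Suc_eq)
  ultimately have "snd (pair_problem :: 'a matrix_problem)
      [interleave_mat (?G t0) (?G t0), interleave_mat (?G t1) (?G t1)]
      [interleave_mat (?G t0) (?H t0), interleave_mat (?G t1) (?H t1)]"
    using UV by (intro pair_problem_rel_interleave) simp
  moreover have "MsX = [interleave_mat (?G t0) (?G t0), interleave_mat (?G t1) (?G t1)]"
    using subst_tuple_diagonal2[OF X, of "\<lambda>i. wU"] T by (simp add: wU_def less_Suc_eq mat_diag_zero)
  moreover have "\<forall>v < 2. [1\<^sub>m 2, mat_diag 2 (\<lambda>i. if i = 0 then 0 else 1)] ! v
      = mat_diag 2 (\<lambda>i. if i = 0 then wU v else wV v :: 'a)"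
    unfolding wU_def wV_def by (auto simp: less_Suc_eq)
  then have "MsY = [interleave_mat (?G t0) (?H t0), interleave_mat (?G t1) (?H t1)]"
    using subst_tuple_diagonal2[OF Y, of "\<lambda>i v. if i = 0 then wU v else wV v"] T by simp
  ultimately show ?thesis by simp
qed

lemma not_contains_spatial2: "\<not> contains (pair_problem :: 'a::field matrix_problem) spatial2_problem"
proof
  assume "contains (pair_problem :: 'a matrix_problem) spatial2_problem"
  then obtain T where
    total: "\<forall>A\<in>fst (spatial2_problem :: 'a matrix_problem). \<exists>Ms. subst_tuple T A Ms" and
    faithful: "\<forall>A\<in>fst (spatial2_problem :: 'a matrix_problem). \<forall>A'\<in>fst spatial2_problem. \<forall>Ms Ms'.
      subst_tuple T A Ms \<longrightarrow> subst_tuple T A' Ms' \<longrightarrow>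
      (snd spatial2_problem A A' \<longleftrightarrow> snd (pair_problem :: 'a matrix_problem) Ms Ms')"
    unfolding contains_def by blast
  define U V X Y :: "'a mat list"
    where "U = [1\<^sub>m 1, 0\<^sub>m 1 1]" and "V = [1\<^sub>m 1, 1\<^sub>m 1]" and "X = [1\<^sub>m 2, 0\<^sub>m 2 2]"
      and "Y = [1\<^sub>m 2, mat_diag 2 (\<lambda>i. if i = 0 then 0 else 1)]"
  have "U \<in> fst spatial2_problem" "V \<in> fst spatial2_problem"
    unfolding spatial2_problem_def U_def V_def by (auto intro!: exI[of _ 1])
  moreover have "X \<in> fst spatial2_problem" "Y \<in> fst spatial2_problem"
    unfolding spatial2_problem_def X_def Y_def by (auto intro!: exI[of _ 2] simp: mat_diag_def)
  ultimately have inputs: "U \<in> fst spatial2_problem" "V \<in> fst spatial2_problem"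
    "X \<in> fst spatial2_problem" "Y \<in> fst spatial2_problem"
    by blast+
  then obtain MsU MsV MsX MsY where subst: "subst_tuple T U MsU" "subst_tuple T V MsV"
    "subst_tuple T X MsX" "subst_tuple T Y MsY"
    using total by meson
  have "snd (pair_problem :: 'a matrix_problem) MsU MsV"
    using faithful inputs(1,2) subst(1,2) spatial2_rel_scalar_pairs unfolding U_def V_def by blast
  then have "snd (pair_problem :: 'a matrix_problem) MsX MsY"
    using subst_tuple_interleave_similar subst unfolding U_def V_def X_def Y_def by blast
  then have "snd spatial2_problem X Y"
    using faithful inputs(3,4) subst(3,4) by blast
  then show False
    using spatial2_not_rel_diag unfolding X_def Y_def by blast
qed

section \<open>Polynomials at one rectangular matrix\<close>

fun constant_term :: "'a::field ncpoly \<Rightarrow> 'a" where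
  "constant_term (Var i) = 0"
| "constant_term (Const c) = c"
| "constant_term (Add p q) = constant_term p + constant_term q"
| "constant_term (Mul p q) = constant_term p * constant_term q"

fun linear_term :: "'a::field ncpoly \<Rightarrow> 'a" where
  "linear_term (Var i) = 1"
| "linear_term (Const c) = 0"
| "linear_term (Add p q) = linear_term p + linear_term q"
| "linear_term (Mul p q) = constant_term p * linear_term q + linear_term p * constant_term q"

text \<open>Only blocks of the shape of M can involve the variable, as M * M is undefined for
  non-square M.\<close>

definition rect_value_shape :: "'a::field mat \<Rightarrow> 'a ncpoly \<Rightarrow> 'a mat \<Rightarrow> bool" where
  "rect_value_shape M p E \<longleftrightarrow>
     (if dim_row E = dim_row M \<and> dim_col E = dim_col M
      then E = linear_term p \<cdot>\<^sub>m M \<and> constant_term p = 0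
      else linear_term p = 0 \<and>
        (if dim_row E = dim_col E then E = constant_term p \<cdot>\<^sub>m 1\<^sub>m (dim_row E)
         else E = 0\<^sub>m (dim_row E) (dim_col E) \<and> constant_term p = 0))"

lemma rect_value_shape_add:
  assumes p: "rect_value_shape M p E" and q: "rect_value_shape M q F"
    and EF: "dim_row E = dim_row F" "dim_col E = dim_col F"
  shows "rect_value_shape M (Add p q) (E + F)"
proof -
  define r c where "r = dim_row E" and "c = dim_col E"
  then have E: "E \<in> carrier_mat r c" and F: "F \<in> carrier_mat r c"
    using EF by auto
  note p' = p[unfolded rect_value_shape_def carrier_matD[OF E]]
  note q' = q[unfolded rect_value_shape_def carrier_matD[OF F]]
  have EFdim: "dim_row (E + F) = r" "dim_col (E + F) = c" using E F by auto
  show ?thesis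
  proof (cases "r = dim_row M \<and> c = dim_col M")
    case True
    then have "E = linear_term p \<cdot>\<^sub>m M" "F = linear_term q \<cdot>\<^sub>m M"
      "constant_term p = 0" "constant_term q = 0"
      using p' q' by auto
    then show ?thesis using True EFdim
      by (simp add: rect_value_shape_def add_smult_distrib_right_mat[OF carrier_mat_triv])
  next
    case not_M: False
    show ?thesis
    proof (cases "r = c")
      case True
      then have "E = constant_term p \<cdot>\<^sub>m 1\<^sub>m r" "F = constant_term q \<cdot>\<^sub>m 1\<^sub>m r"
        "linear_term p = 0" "linear_term q = 0"
        using p' q' not_M by auto
      then show ?thesis using True not_M EFdim
        by (auto simp: rect_value_shape_def add_smult_distrib_right_mat[OF one_carrier_mat])
    next
      case False
      then have "E = 0\<^sub>m r c" "F = 0\<^sub>m r c" "constant_term p = 0" "constant_term q = 0"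
        "linear_term p = 0" "linear_term q = 0"
        using p' q' not_M by auto
      then show ?thesis using False not_M EFdim by (auto simp: rect_value_shape_def)
    qed
  qed
qed

lemma rect_value_shape_mult:
  assumes M: "M \<in> carrier_mat m n" "m \<noteq> n"
    and p: "rect_value_shape M p E" and q: "rect_value_shape M q F"
    and EF: "dim_col E = dim_row F"
  shows "rect_value_shape M (Mul p q) (E * F)"
proof -
  define r k s where "r = dim_row E" and "k = dim_col E" and "s = dim_col F"
  then have E: "E \<in> carrier_mat r k" and F: "F \<in> carrier_mat k s"
    using EF by auto
  note p' = p[unfolded rect_value_shape_def carrier_matD[OF E] carrier_matD[OF M(1)]]
  note q' = q[unfolded rect_value_shape_def carrier_matD[OF F] carrier_matD[OF M(1)]]
  have EFdim: "dim_row (E * F) = r" "dim_col (E * F) = s" using E F by auto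
  consider (left) "r = m" "k = n" | (right) "k = m" "s = n" "r \<noteq> m \<or> k \<noteq> n"
    | (square) "r = k" "k = s" "r \<noteq> m \<or> k \<noteq> n" "k \<noteq> m \<or> s \<noteq> n"
    | (zero_left) "r \<noteq> k" "r \<noteq> m \<or> k \<noteq> n" "k \<noteq> m \<or> s \<noteq> n"
    | (zero_right) "k \<noteq> s" "r \<noteq> m \<or> k \<noteq> n" "k \<noteq> m \<or> s \<noteq> n"
    by argo
  then show ?thesis
  proof cases
    case left
    then have E': "E = linear_term p \<cdot>\<^sub>m M" "constant_term p = 0" using p' by auto
    show ?thesis
    proof (cases "s = n")
      case True
      then have "F = constant_term q \<cdot>\<^sub>m 1\<^sub>m n" "linear_term q = 0" using q' left M(2) by auto
      then show ?thesis using E' M left True EFdim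
        by (auto simp: rect_value_shape_def mult_smult_distrib mult_smult_assoc_mat)
    next
      case False
      then have "F = 0\<^sub>m n s" "linear_term q = 0" "constant_term q = 0" using q' left M(2) by auto
      then show ?thesis using E' M left False EFdim by (auto simp: rect_value_shape_def)
    qed
  next
    case right
    then have F': "F = linear_term q \<cdot>\<^sub>m M" "constant_term q = 0" "linear_term p = 0"
      using p' q' by auto
    show ?thesis
    proof (cases "r = m")
      case True
      then have "E = constant_term p \<cdot>\<^sub>m 1\<^sub>m m" using p' right by auto
      then show ?thesis using F' M right True EFdim
        by (auto simp: rect_value_shape_def mult_smult_distrib mult_smult_assoc_mat)
    next
      case False
      then have "E = 0\<^sub>m r m" "constant_term p = 0" using p' right by auto
      then show ?thesis using F' M right False EFdim by (auto simp: rect_value_shape_def)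
    qed
  next
    case square
    then have "E = constant_term p \<cdot>\<^sub>m 1\<^sub>m r" "F = constant_term q \<cdot>\<^sub>m 1\<^sub>m r"
      "linear_term p = 0" "linear_term q = 0"
      using p' q' M(2) by auto
    then show ?thesis using square M EFdim
      by (auto simp: rect_value_shape_def mult_smult_distrib mult_smult_assoc_mat)
  next
    case zero_left
    then have "E = 0\<^sub>m r k" "constant_term p = 0" "linear_term p = 0" "linear_term q = 0"
      using p' q' by auto
    then show ?thesis using zero_left F EFdim M(2) by (auto simp: rect_value_shape_def)
  next
    case zero_right
    then have "F = 0\<^sub>m k s" "constant_term q = 0" "linear_term p = 0" "linear_term q = 0"
      using p' q' by auto
    then show ?thesis using zero_right E EFdim M(2) by (auto simp: rect_value_shape_def)
  qed
qed

lemma ev_rectangular_shape: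
  assumes "ev [M] p E" "M \<in> carrier_mat m n" "m \<noteq> n"
  shows "rect_value_shape M p E"
  using assms(1)
proof induction
  case (ev_var i)
  then show ?case by (auto simp: rect_value_shape_def)
next
  case (ev_const c k)
  then show ?case using assms(2,3) by (auto simp: rect_value_shape_def)
next
  case (ev_zero r s)
  then show ?case by (auto simp: rect_value_shape_def intro!: eq_matI)
next
  case (ev_add p E q F)
  then show ?case by (intro rect_value_shape_add)
next
  case (ev_mul p E q F)
  then show ?case using assms(2,3) by (intro rect_value_shape_mult)
qed

definition pair_swap :: "nat \<Rightarrow> nat" where
  "pair_swap i = (if even i then Suc i else i - 1)"

lemma pair_swap_pair_swap [simp]: "pair_swap (pair_swap i) = i"
  by (cases "even i") (auto simp: pair_swap_def elim: oddE)

lemma pair_swap_inj [simp]: "pair_swap i = pair_swap j \<longleftrightarrow> i = j"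
  by (metis pair_swap_pair_swap)

lemma pair_swap_eq_0: "pair_swap i = 0 \<longleftrightarrow> i = 1"
  by (cases "even i") (auto simp: pair_swap_def elim: oddE)

lemma pair_swap_eq_iff: "j = pair_swap i \<longleftrightarrow> i = pair_swap j"
  by (metis pair_swap_pair_swap)

lemma pair_swap_less: "even n \<Longrightarrow> i < n \<Longrightarrow> pair_swap i < n"
  by (auto simp: pair_swap_def elim!: evenE)

lemma pair_swap_add: "even a \<Longrightarrow> pair_swap (a + i) = a + pair_swap i"
  by (cases "even i") (auto simp: pair_swap_def elim: oddE)

definition pair_swap_mat :: "nat \<Rightarrow> 'a::field mat" where
  "pair_swap_mat n = mat n n (\<lambda>(i, j). if j = pair_swap i then 1 else 0)"

lemma pair_swap_mat_dims [simp]: "dim_row (pair_swap_mat n) = n" "dim_col (pair_swap_mat n) = n"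
  by (simp_all add: pair_swap_mat_def)

lemma pair_swap_mat_carrier [simp]: "pair_swap_mat n \<in> carrier_mat n n"
  by (simp add: carrier_matI)

lemma pair_swap_mat_mult_index:
  assumes X: "X \<in> carrier_mat a b" and "even a" "even b" "i < a" "j < b"
  shows "(pair_swap_mat a * X) $$ (i, j) = X $$ (pair_swap i, j)"
    and "(X * pair_swap_mat b) $$ (i, j) = X $$ (i, pair_swap j)"
proof -
  have "(pair_swap_mat a * X) $$ (i, j) = (\<Sum>c < a. pair_swap_mat a $$ (i, c) * X $$ (c, j))"
    using assms by (auto simp: scalar_prod_def atLeast0LessThan intro!: sum.cong)
  also have "\<dots> = (\<Sum>c < a. if c = pair_swap i then X $$ (c, j) else 0)"
    using assms by (intro sum.cong) (auto simp: pair_swap_mat_def)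
  finally show "(pair_swap_mat a * X) $$ (i, j) = X $$ (pair_swap i, j)"
    using assms pair_swap_less by simp
  have "(X * pair_swap_mat b) $$ (i, j) = (\<Sum>c < b. X $$ (i, c) * pair_swap_mat b $$ (c, j))"
    using assms by (auto simp: scalar_prod_def atLeast0LessThan intro!: sum.cong)
  also have "\<dots> = (\<Sum>c < b. if c = pair_swap j then X $$ (i, c) else 0)"
    using assms pair_swap_eq_iff[of j] by (intro sum.cong) (auto simp: pair_swap_mat_def)
  finally show "(X * pair_swap_mat b) $$ (i, j) = X $$ (i, pair_swap j)"
    using assms pair_swap_less by simp
qed

lemma pair_swap_mat_conj_index:
  assumes X: "X \<in> carrier_mat a b" and ab: "even a" "even b" and ij: "i < a" "j < b"
  shows "(pair_swap_mat a * X * pair_swap_mat b) $$ (i, j) = X $$ (pair_swap i, pair_swap j)"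
proof -
  have "pair_swap_mat a * X \<in> carrier_mat a b"
    by (rule mult_carrier_mat[OF pair_swap_mat_carrier X])
  then have "(pair_swap_mat a * X * pair_swap_mat b) $$ (i, j) = (pair_swap_mat a * X) $$ (i, pair_swap j)"
    using pair_swap_mat_mult_index(2) ab ij by blast
  also have "\<dots> = X $$ (pair_swap i, pair_swap j)"
    using pair_swap_mat_mult_index(1)[OF X ab] ij pair_swap_less[OF ab(2)] by blast
  finally show ?thesis .
qed

lemma pair_swap_mat_involution:
  assumes "even n"
  shows "pair_swap_mat n * pair_swap_mat n = (1\<^sub>m n :: 'a::field mat)"
proof (rule eq_matI)
  fix i j assume "i < dim_row (1\<^sub>m n :: 'a mat)" "j < dim_col (1\<^sub>m n :: 'a mat)"
  then have ij: "i < n" "j < n" by simp_all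
  have "(pair_swap_mat n * pair_swap_mat n :: 'a mat) $$ (i, j) = pair_swap_mat n $$ (pair_swap i, j)"
    by (rule pair_swap_mat_mult_index(1)[OF pair_swap_mat_carrier assms assms ij])
  also have "\<dots> = (1\<^sub>m n :: 'a mat) $$ (i, j)"
    using ij pair_swap_less[OF assms] by (auto simp: pair_swap_mat_def)
  finally show "(pair_swap_mat n * pair_swap_mat n :: 'a mat) $$ (i, j) = (1\<^sub>m n :: 'a mat) $$ (i, j)" .
qed auto

lemma rect_value_shape_pair_swap:
  assumes shape: "rect_value_shape M1 p E1" "rect_value_shape M2 p E2"
    and E: "E1 \<in> carrier_mat a b" "E2 \<in> carrier_mat a b" "even a" "even b" "i < a" "j < b"
    and M: "M1 \<in> carrier_mat m n" "M2 \<in> carrier_mat m n"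
    and swap: "\<forall>i < m. \<forall>j < n. M2 $$ (i, j) = M1 $$ (pair_swap i, pair_swap j)"
  shows "E1 $$ (pair_swap i, pair_swap j) = E2 $$ (i, j)"
proof -
  have swapped: "pair_swap i < a" "pair_swap j < b" using E pair_swap_less by auto
  note shape1 = shape(1)[unfolded rect_value_shape_def carrier_matD[OF E(1)] carrier_matD[OF M(1)]]
  note shape2 = shape(2)[unfolded rect_value_shape_def carrier_matD[OF E(2)] carrier_matD[OF M(2)]]
  consider (lin) "a = m" "b = n" | (scalar) "\<not> (a = m \<and> b = n)" "a = b"
    | (zero) "\<not> (a = m \<and> b = n)" "a \<noteq> b"
    by argo
  then show ?thesis
  proof cases
    case lin
    then have "E1 = linear_term p \<cdot>\<^sub>m M1" "E2 = linear_term p \<cdot>\<^sub>m M2"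
      using shape1 shape2 by auto
    then show ?thesis using lin E M swap swapped by auto
  next
    case scalar
    then have "E1 = constant_term p \<cdot>\<^sub>m 1\<^sub>m a" "E2 = constant_term p \<cdot>\<^sub>m 1\<^sub>m a"
      using shape1 shape2 by auto
    then show ?thesis using scalar E swapped by auto
  next
    case zero
    then have "E1 = 0\<^sub>m a b" "E2 = 0\<^sub>m a b"
      using shape1 shape2 by auto
    then show ?thesis using E swapped by auto
  qed
qed

lemma block_index_decomp:
  assumes "a < sum_list (R :: nat list)"
  obtains r i where "r < length R" "i < R ! r" "a = sum_list (take r R) + i"
  using assms
proof (induction R arbitrary: a thesis)
  case Nil
  then show ?case by simp
next
  case (Cons x R)
  show ?case
  proof (cases "a < x")
    case True
    then show ?thesis using Cons.prems(1)[of 0 a] by simp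
  next
    case False
    then have "a - x < sum_list R" using Cons.prems(2) by simp
    then obtain r i where "r < length R" "i < R ! r" "a - x = sum_list (take r R) + i"
      using Cons.IH by blast
    then show ?thesis using Cons.prems(1)[of "Suc r" i] False by simp
  qed
qed

lemma dvd_sum_list: "\<forall>x \<in> set xs. d dvd x \<Longrightarrow> (d :: 'a::comm_semiring_1) dvd sum_list xs"
  by (induction xs) auto

lemma pair_swap_block_offset:
  assumes "\<forall>x \<in> set R. even x"
  shows "pair_swap (sum_list (take r R) + i) = sum_list (take r R) + pair_swap i"
  using assms by (intro pair_swap_add dvd_sum_list) (auto dest: in_set_takeD)

lemma subst_pmat_single_block_sizes:
  assumes "subst_pmat t [M1] P" and "M1 \<in> carrier_mat m n" "M2 \<in> carrier_mat m n"
  shows "map (dimval [M2]) (prows t) = map (dimval [M1]) (prows t)"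
    and "map (dimval [M2]) (pcols t) = map (dimval [M1]) (pcols t)"
    and "set (map (dimval [M1]) (prows t)) \<subseteq> {m, n}"
    and "set (map (dimval [M1]) (pcols t)) \<subseteq> {m, n}"
proof -
  have labels: "\<forall>d\<in>set (prows t) \<union> set (pcols t).
      case d of RowOf i \<Rightarrow> i < length [M1] | ColOf i \<Rightarrow> i < length [M1]"
    using assms(1) unfolding subst_pmat_def Let_def by blast
  have sizes: "dimval [M2] d = dimval [M1] d \<and> dimval [M1] d \<in> {m, n}"
    if "d \<in> set (prows t) \<union> set (pcols t)" for d
  proof -
    have "case d of RowOf i \<Rightarrow> i < length [M1] | ColOf i \<Rightarrow> i < length [M1]"
      using labels that by blast
    then show ?thesis using assms(2,3) by (cases d) auto
  qed
  then show "map (dimval [M2]) (prows t) = map (dimval [M1]) (prows t)"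
    "map (dimval [M2]) (pcols t) = map (dimval [M1]) (pcols t)"
    "set (map (dimval [M1]) (prows t)) \<subseteq> {m, n}"
    "set (map (dimval [M1]) (pcols t)) \<subseteq> {m, n}"
    by auto
qed

lemma subst_pmat_pair_swap:
  assumes P: "subst_pmat t [M1] P" and Q: "subst_pmat t [M2] Q"
    and M: "M1 \<in> carrier_mat m n" "M2 \<in> carrier_mat m n" "m \<noteq> n" "even m" "even n"
    and swap: "\<forall>i < m. \<forall>j < n. M2 $$ (i, j) = M1 $$ (pair_swap i, pair_swap j)"
  shows "Q = pair_swap_mat (dim_row P) * P * pair_swap_mat (dim_col P)" and "even (dim_row P)"
proof -
  define R C where "R = map (dimval [M1]) (prows t)" and "C = map (dimval [M1]) (pcols t)"
  note sizes = subst_pmat_single_block_sizes[OF P M(1,2), folded R_def C_def]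
  have even: "\<forall>x \<in> set R. even x" "\<forall>x \<in> set C. even x"
    using sizes(3,4) M(4,5) by auto
  obtain E1 where dimP: "dim_row P = sum_list R" "dim_col P = sum_list C"
    and E1: "\<forall>r < length R. \<forall>s < length C. E1 r s \<in> carrier_mat (R ! r) (C ! s) \<and>
      ev [M1] (pent t r s) (E1 r s) \<and> (\<forall>i < R ! r. \<forall>j < C ! s.
        P $$ (sum_list (take r R) + i, sum_list (take s C) + j) = E1 r s $$ (i, j))"
    using P unfolding subst_pmat_def Let_def R_def[symmetric] C_def[symmetric] by auto
  obtain E2 where dimQ: "dim_row Q = sum_list R" "dim_col Q = sum_list C"
    and E2: "\<forall>r < length R. \<forall>s < length C. E2 r s \<in> carrier_mat (R ! r) (C ! s) \<and>
      ev [M2] (pent t r s) (E2 r s) \<and> (\<forall>i < R ! r. \<forall>j < C ! s.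
        Q $$ (sum_list (take r R) + i, sum_list (take s C) + j) = E2 r s $$ (i, j))"
    using Q unfolding subst_pmat_def Let_def sizes(1,2) by auto
  show "even (dim_row P)" using dimP even by (simp add: dvd_sum_list)
  show "Q = pair_swap_mat (dim_row P) * P * pair_swap_mat (dim_col P)"
  proof (rule eq_matI)
    fix a b assume "a < dim_row (pair_swap_mat (dim_row P) * P * pair_swap_mat (dim_col P))"
      "b < dim_col (pair_swap_mat (dim_row P) * P * pair_swap_mat (dim_col P))"
    then have a: "a < sum_list R" and b: "b < sum_list C" using dimP by auto
    obtain r i where r: "r < length R" "i < R ! r" "a = sum_list (take r R) + i"
      by (rule block_index_decomp[OF a])
    obtain s j where s: "s < length C" "j < C ! s" "b = sum_list (take s C) + j"
      by (rule block_index_decomp[OF b])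
    have block_even: "even (R ! r)" "even (C ! s)" using even r(1) s(1) by auto
    have E1_rs: "E1 r s \<in> carrier_mat (R ! r) (C ! s)" "ev [M1] (pent t r s) (E1 r s)"
      "\<forall>i < R ! r. \<forall>j < C ! s.
        P $$ (sum_list (take r R) + i, sum_list (take s C) + j) = E1 r s $$ (i, j)"
      using E1 r(1) s(1) by simp_all
    have E2_rs: "E2 r s \<in> carrier_mat (R ! r) (C ! s)" "ev [M2] (pent t r s) (E2 r s)"
      "\<forall>i < R ! r. \<forall>j < C ! s.
        Q $$ (sum_list (take r R) + i, sum_list (take s C) + j) = E2 r s $$ (i, j)"
      using E2 r(1) s(1) by simp_all
    have "P \<in> carrier_mat (sum_list R) (sum_list C)" unfolding carrier_mat_def using dimP by simp
    then have "(pair_swap_mat (dim_row P) * P * pair_swap_mat (dim_col P)) $$ (a, b)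
        = P $$ (pair_swap a, pair_swap b)"
      unfolding dimP using even a b by (intro pair_swap_mat_conj_index) (simp_all add: dvd_sum_list)
    also have "\<dots> = P $$ (sum_list (take r R) + pair_swap i, sum_list (take s C) + pair_swap j)"
      unfolding r(3) s(3) pair_swap_block_offset[OF even(1)] pair_swap_block_offset[OF even(2)] ..
    also have "\<dots> = E1 r s $$ (pair_swap i, pair_swap j)"
      using E1_rs(3) pair_swap_less[OF block_even(1) r(2)] pair_swap_less[OF block_even(2) s(2)]
      by simp
    also have "\<dots> = E2 r s $$ (i, j)"
      by (rule rect_value_shape_pair_swap[OF ev_rectangular_shape[OF E1_rs(2) M(1,3)]
            ev_rectangular_shape[OF E2_rs(2) M(2,3)] E1_rs(1) E2_rs(1) block_even r(2) s(2) M(1,2) swap])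
    also have "\<dots> = Q $$ (a, b)" using E2_rs(3) r s by simp
    finally show "Q $$ (a, b) = (pair_swap_mat (dim_row P) * P * pair_swap_mat (dim_col P)) $$ (a, b)"
      by (rule sym)
  qed (use dimP dimQ in auto)
qed

section \<open>Tensors\<close>

lemma tensor_problem_not_rel:
  "\<not> snd (tensor_problem p)
       [mat 2 4 (\<lambda>(i, j). if i = 0 \<and> j = 0 then 1 else 0) :: 'a::field mat]
       [mat 2 4 (\<lambda>(i, j). if i = 1 \<and> j = 1 then 1 else 0)]"
proof
  let ?M1 = "mat 2 4 (\<lambda>(i, j). if i = 0 \<and> j = 0 then 1 else 0) :: 'a mat"
  let ?M2 = "mat 2 4 (\<lambda>(i, j). if i = 1 \<and> j = 1 then 1 else 0) :: 'a mat"
  assume "snd (tensor_problem p) [?M1] [?M2]"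
  then obtain m M N C D where MN: "[?M1] = [M]" "[?M2] = [N]" "M \<in> carrier_mat m (m * m)"
    and CD: "C \<in> carrier_mat m m" "D \<in> carrier_mat m m" "D * transpose_mat C = 1\<^sub>m m"
    and transform: "\<forall>j1<m. \<forall>j2<m. \<forall>j3<m. tent m N j1 j2 j3 =
      (\<Sum>i1<m. \<Sum>i2<m. \<Sum>i3<m. tent m M i1 i2 i3 *
        (if 0 < p then C else D) $$ (i1, j1) * (if 1 < p then C else D) $$ (i2, j2) *
        (if 2 < p then C else D) $$ (i3, j3))"
    unfolding tensor_problem_def snd_conv Let_def by auto
  have m: "m = 2" using MN(1,3) by auto
  define F0 F1 F2 where "F0 = (if 0 < p then C else D)" and "F1 = (if 1 < p then C else D)"
    and "F2 = (if 2 < p then C else D)"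
  \<comment> \<open>?M1 is e0 \<otimes> e0 \<otimes> e0, so its image is the product of the first rows of F0, F1, F2;
    it has to be e1 \<otimes> e1 \<otimes> e0.\<close>
  have image: "?M2 $$ (j1, j3 * 2 + j2) = F0 $$ (0, j1) * F1 $$ (0, j2) * F2 $$ (0, j3)"
    if "j1 < 2" "j2 < 2" "j3 < 2" for j1 j2 j3
  proof -
    have "tent 2 ?M2 j1 j2 j3 = (\<Sum>i1<2. \<Sum>i2<2. \<Sum>i3<2. tent 2 ?M1 i1 i2 i3 *
        F0 $$ (i1, j1) * F1 $$ (i2, j2) * F2 $$ (i3, j3))"
      using transform MN that m unfolding F0_def F1_def F2_def by auto
    then show ?thesis by (simp add: tent_def numeral_2_eq_2)
  qed
  have "F0 $$ (0, 1) * F1 $$ (0, 1) * F2 $$ (0, 0) = 1"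
    and zeros: "F0 $$ (0, 0) * F1 $$ (0, 1) * F2 $$ (0, 0) = 0"
      "F0 $$ (0, 1) * F1 $$ (0, 0) * F2 $$ (0, 0) = 0"
      "F0 $$ (0, 1) * F1 $$ (0, 1) * F2 $$ (0, 1) = 0"
    using image[of 1 1 0] image[of 0 1 0] image[of 1 0 0] image[of 1 1 1] by simp_all
  then have "F0 $$ (0, 0) = 0" "F1 $$ (0, 0) = 0" "F2 $$ (0, 1) = 0"
    by auto
  \<comment> \<open>Whatever p is, one of C, D has first row proportional to e0 and the other to e1,
    contradicting D C^T = 1.\<close>
  then have "(D * transpose_mat C) $$ (0, 0) = 0"
    using CD(1,2) m unfolding F0_def F1_def F2_def
    by (cases "p = 0"; cases "p = 1"; cases "p = 2")
      (auto simp: scalar_prod_def numeral_2_eq_2 atLeast0LessThan lessThan_Suc)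
  then show False using CD(3) m by simp
qed

lemma subst_tuple_pair_swap_similar:
  assumes subst: "subst_tuple T [M1] Ms1" "subst_tuple T [M2] Ms2"
    and pair: "Ms1 \<in> fst (pair_problem :: 'a::field matrix_problem)"
    and M: "M1 \<in> carrier_mat m n" "M2 \<in> carrier_mat m n" "m \<noteq> n" "even m" "even n"
    and swap: "\<forall>i < m. \<forall>j < n. M2 $$ (i, j) = M1 $$ (pair_swap i, pair_swap j)"
  shows "snd (pair_problem :: 'a matrix_problem) Ms1 Ms2"
proof -
  obtain P0 P1 k where Ms1: "Ms1 = [P0, P1]" and P: "P0 \<in> carrier_mat k k" "P1 \<in> carrier_mat k k"
    using pair by (auto simp: pair_problem_def)
  have "length T = 2" "length Ms2 = 2" using subst Ms1 by (simp_all add: subst_tuple_def)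
  then have "subst_pmat (T ! l) [M1] (Ms1 ! l)" "subst_pmat (T ! l) [M2] (Ms2 ! l)"
    if "l < 2" for l
    using subst that by (auto simp: subst_tuple_def)
  note swapped = subst_pmat_pair_swap[OF this M swap]
  have "even k" using swapped(2)[of 0] P Ms1 by simp
  have "Ms2 = [pair_swap_mat k * P0 * pair_swap_mat k, pair_swap_mat k * P1 * pair_swap_mat k]"
    using swapped(1)[of 0] swapped(1)[of 1] P Ms1 \<open>length Ms2 = 2\<close>
    by (auto intro!: nth_equalityI simp: less_2_cases_iff)
  then show ?thesis
    using pair_problem_relI[OF _ _ pair_swap_mat_involution[OF \<open>even k\<close>]
        pair_swap_mat_involution[OF \<open>even k\<close>] P] Ms1 by simp
qed

lemma not_contains_tensor: "\<not> contains (pair_problem :: 'a::field matrix_problem) (tensor_problem p)"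
proof
  assume "contains (pair_problem :: 'a matrix_problem) (tensor_problem p)"
  then obtain T where
    total: "\<forall>A\<in>fst (tensor_problem p). \<exists>Ms. subst_tuple T A Ms" and
    into: "\<forall>A\<in>fst (tensor_problem p). \<forall>Ms.
      subst_tuple T A Ms \<longrightarrow> Ms \<in> fst (pair_problem :: 'a matrix_problem)" and
    faithful: "\<forall>A\<in>fst (tensor_problem p). \<forall>A'\<in>fst (tensor_problem p). \<forall>Ms Ms'.
      subst_tuple T A Ms \<longrightarrow> subst_tuple T A' Ms' \<longrightarrow>
      (snd (tensor_problem p) A A' \<longleftrightarrow> snd (pair_problem :: 'a matrix_problem) Ms Ms')"
    unfolding contains_def by blast
  define M1 M2 :: "'a mat"
    where "M1 = mat 2 4 (\<lambda>(i, j). if i = 0 \<and> j = 0 then 1 else 0)"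
      and "M2 = mat 2 4 (\<lambda>(i, j). if i = 1 \<and> j = 1 then 1 else 0)"
  have M: "M1 \<in> carrier_mat 2 4" "M2 \<in> carrier_mat 2 4" by (simp_all add: M1_def M2_def)
  have swap: "\<forall>i < 2. \<forall>j < 4. M2 $$ (i, j) = M1 $$ (pair_swap i, pair_swap j)"
    using pair_swap_less[of 2] pair_swap_less[of 4] by (auto simp: M1_def M2_def pair_swap_eq_0)
  have inputs: "[M1] \<in> fst (tensor_problem p)" "[M2] \<in> fst (tensor_problem p)"
    using M unfolding tensor_problem_def by (auto intro!: exI[of _ 2])
  then obtain Ms1 Ms2 where subst: "subst_tuple T [M1] Ms1" "subst_tuple T [M2] Ms2"
    using total by meson
  have "snd (pair_problem :: 'a matrix_problem) Ms1 Ms2"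
    using into inputs subst M swap by (intro subst_tuple_pair_swap_similar) auto
  then have "snd (tensor_problem p) [M1] [M2]" using faithful inputs subst by blast
  then show False using tensor_problem_not_rel unfolding M1_def M2_def by blast
qed

theorem theorem4p4:
  shows "\<not> contains (pair_problem :: 'a::field matrix_problem) spatial2_problem \<and>
         (\<forall>p\<in>{0,1,2,3}. \<not> contains (pair_problem :: 'a::field matrix_problem) (tensor_problem p))"
  using not_contains_spatial2 not_contains_tensor by blast

end
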